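(* Let $X$ be a gamble and $\varepsilon>0$. Let $\underline{P}$ be a coherent lower prevision on a set of gambles as specified below, with conjugate $\overline{P}$, let $\underline{Q}$ be any coherent lower prevision on the linear space of all gambles extending $\underline{P}$, and let $\underline{V}(X)=\min_{c\in\mathbb{R}}\underline{Q}((X-c)^2)$ and $\overline{V}(X)=\min_{c\in\mathbb{R}}\overline{Q}((X-c)^2)$ be the lower and upper variances of $X$. (a) If $\underline{P}$ is coherent on $\{X,-X,I_{(X\le\underline{P}(X)-\varepsilon)},I_{(X\le\overline{P}(X)-\varepsilon)}\}$, then $$\underline{P}(X\le\overline{P}(X)-\varepsilon)\le\frac{\overline{V}(X)}{\overline{V}(X)+\varepsilon^2},\qquad \underline{P}(X\le\underline{P}(X)-\varepsilon)\le\frac{\underline{V}(X)}{\underline{V}(X)+\varepsilon^2}.$$ (b) If $\underline{P}$ is coherent on $\{X,-X,I_{(X\ge\underline{P}(X)+\varepsilon)},I_{(X\ge\overline{P}(X)+\varepsilon)}\}$, then $$\underline{P}(X\ge\underline{P}(X)+\varepsilon)\le\frac{\overline{V}(X)}{\overline{V}(X)+\varepsilon^2},\qquad \underline{P}(X\ge\overline{P}(X)+\varepsilon)\le\frac{\underline{V}(X)}{\underline{V}(X)+\varepsilon^2}.$$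
   Context: $\Pi$ is a partition of the sure event into pairwise disjoint non-impossible events; a gamble is a bounded map $X:\Pi\to\mathbb{R}$; $(X\le a)$, $(X\ge a)$ are events with indicators, and $\underline{P}(X\le a)=\underline{P}(I_{(X\le a)})$. A map $P:\mathcal{D}\to\mathbb{R}$ is a dF-coherent prevision iff for all $n\in\mathbb{N}$, $s_0,\dots,s_n\in\mathbb{R}$, $X_0,\dots,X_n\in\mathcal{D}$, $\sup\sum_{i=0}^n s_i(X_i-P(X_i))\ge 0$. A lower prevision $\underline{P}:\mathcal{D}\to\mathbb{R}$ is coherent iff there is a nonempty set of dF-coherent previsions on $\mathcal{D}$ whose pointwise infimum is $\underline{P}$; every coherent lower prevision on $\mathcal{D}$ has a coherent extension to all gambles. Conjugates: $\overline{P}(Y)=-\underline{P}(-Y)$, $\overline{Q}(Y)=-\underline{Q}(-Y)$. The minima defining $\underline{V}(X),\overline{V}(X)$ are attained (Walley). *)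

theory Defs
  imports Main "HOL-Analysis.Analysis"
begin

text \<open>The partition Pi is modelled by the type 'w of its atoms. A gamble is a bounded
real-valued map on Pi.\<close>

definition gamble :: "('w \<Rightarrow> real) \<Rightarrow> bool" where
  "gamble X \<longleftrightarrow> (\<exists>B. \<forall>w. \<bar>X w\<bar> \<le> B)"

definition ind_le :: "('w \<Rightarrow> real) \<Rightarrow> real \<Rightarrow> ('w \<Rightarrow> real)" where
  "ind_le X a = (\<lambda>w. if X w \<le> a then 1 else 0)"

definition ind_ge :: "('w \<Rightarrow> real) \<Rightarrow> real \<Rightarrow> ('w \<Rightarrow> real)" where
  "ind_ge X a = (\<lambda>w. if X w \<ge> a then 1 else 0)"

definition dF_coherent :: "('w \<Rightarrow> real) set \<Rightarrow> (('w \<Rightarrow> real) \<Rightarrow> real) \<Rightarrow> bool" where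
  "dF_coherent D P \<longleftrightarrow>
     (\<forall>(n::nat) (s::nat \<Rightarrow> real) (Xs::nat \<Rightarrow> ('w \<Rightarrow> real)).
        (\<forall>i\<le>n. Xs i \<in> D) \<longrightarrow>
        (SUP w. \<Sum>i\<le>n. s i * (Xs i w - P (Xs i))) \<ge> 0)"

definition coherent_lp :: "('w \<Rightarrow> real) set \<Rightarrow> (('w \<Rightarrow> real) \<Rightarrow> real) \<Rightarrow> bool" where
  "coherent_lp D LP \<longleftrightarrow>
     (\<exists>M. M \<noteq> {} \<and> (\<forall>P\<in>M. dF_coherent D P) \<and>
          (\<forall>Y\<in>D. LP Y = (INF P\<in>M. P Y)))"

definition upper :: "(('w \<Rightarrow> real) \<Rightarrow> real) \<Rightarrow> ('w \<Rightarrow> real) \<Rightarrow> real" where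
  "upper LP Y = - LP (\<lambda>w. - Y w)"

text \<open>Lower and upper variances (the minima are attained, so they equal the infima).\<close>

definition lower_var :: "(('w \<Rightarrow> real) \<Rightarrow> real) \<Rightarrow> ('w \<Rightarrow> real) \<Rightarrow> real" where
  "lower_var LQ X = (INF c. LQ (\<lambda>w. (X w - c)\<^sup>2))"

definition upper_var :: "(('w \<Rightarrow> real) \<Rightarrow> real) \<Rightarrow> ('w \<Rightarrow> real) \<Rightarrow> real" where
  "upper_var LQ X = (INF c. upper LQ (\<lambda>w. (X w - c)\<^sup>2))"

end

theory Submission
  imports Defs
begin

text \<open>Every linear prevision P satisfies Cantelli's one-sided Chebyshev inequality
  P(X \<le> P X - t) \<le> V / (V + t^2) for any V bounding its variance P(X^2) - (P X)^2.
  A coherent lower prevision on all gambles is the lower envelope of a set M of linear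
  previsions, each of which has variance at most the upper variance, and some of which
  have variance arbitrarily close to the lower variance. Choosing P in M with P X close to
  the upper (resp. lower) prevision of X, applying Cantelli, and letting the approximation
  error tend to 0 gives the bounds for (X \<le> a); those for (X \<ge> a) follow by passing
  to -X.\<close>

abbreviation linear_prevision :: "(('w \<Rightarrow> real) \<Rightarrow> real) \<Rightarrow> bool" where
  "linear_prevision P \<equiv> dF_coherent {Y. gamble Y} P"

abbreviation prevision_variance :: "(('w \<Rightarrow> real) \<Rightarrow> real) \<Rightarrow> ('w \<Rightarrow> real) \<Rightarrow> real" where
  "prevision_variance P X \<equiv> P (\<lambda>w. (X w)\<^sup>2) - (P X)\<^sup>2"

lemma gamble_uminus: "gamble X \<Longrightarrow> gamble (\<lambda>w. - X w)"
  unfolding gamble_def by auto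

lemma gamble_ind_le: "gamble (ind_le X a)"
  unfolding gamble_def ind_le_def by (rule exI[of _ 1]) auto

lemma gamble_square_diff:
  assumes "gamble X"
  shows "gamble (\<lambda>w. (X w - c)\<^sup>2)"
proof -
  obtain B where B: "\<And>w. \<bar>X w\<bar> \<le> B" using assms unfolding gamble_def by blast
  have "\<bar>(X w - c)\<^sup>2\<bar> \<le> (B + \<bar>c\<bar>)\<^sup>2" for w
  proof -
    have "\<bar>X w - c\<bar> \<le> B + \<bar>c\<bar>" using B[of w] by linarith
    then have "\<bar>X w - c\<bar>\<^sup>2 \<le> (B + \<bar>c\<bar>)\<^sup>2" by (rule power_mono) simp
    then show ?thesis by simp
  qed
  then show ?thesis unfolding gamble_def by blast
qed

lemma gamble_square: "gamble X \<Longrightarrow> gamble (\<lambda>w. (X w)\<^sup>2)"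
  using gamble_square_diff[of X 0] by simp

lemma ind_ge_eq_ind_le_uminus: "ind_ge X a = ind_le (\<lambda>w. - X w) (- a)"
  unfolding ind_ge_def ind_le_def by auto

lemma upper_uminus: "upper LQ (\<lambda>w. - X w) = - LQ X"
  unfolding upper_def by simp

lemma INF_uminus_reindex: "(INF c::real. f (- c)) = (INF c. f c :: real)"
proof -
  have "range (\<lambda>c::real. - c) = UNIV" by (rule surjI[of _ uminus]) simp
  then show ?thesis by (metis image_image)
qed

lemma square_uminus_diff: "(\<lambda>w. (- X w - c)\<^sup>2) = (\<lambda>w. (X w - (- c))\<^sup>2)" for X :: "'w \<Rightarrow> real"
  by (rule ext) algebra

lemma lower_var_uminus: "lower_var LQ (\<lambda>w. - X w) = lower_var LQ X"
  unfolding lower_var_def square_uminus_diff by (rule INF_uminus_reindex)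

lemma upper_var_uminus: "upper_var LQ (\<lambda>w. - X w) = upper_var LQ X"
  unfolding upper_var_def square_uminus_diff by (rule INF_uminus_reindex)

lemma dF_coherent_combination_le:
  assumes P: "dF_coherent D P" and D: "Y1 \<in> D" "Y2 \<in> D" "Y3 \<in> D"
    and bound: "\<And>w. a * Y1 w + b * Y2 w + c * Y3 w \<le> k"
  shows "a * P Y1 + b * P Y2 + c * P Y3 \<le> k"
proof -
  define Xs where "Xs = (\<lambda>i::nat. [Y1, Y2, Y3] ! i)"
  define s where "s = (\<lambda>i::nat. [a, b, c] ! i)"
  have "\<forall>i\<le>2. Xs i \<in> D" using D by (auto simp: Xs_def le_Suc_eq numeral_2_eq_2)
  with P have "0 \<le> (SUP w. \<Sum>i\<le>2. s i * (Xs i w - P (Xs i)))"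
    unfolding dF_coherent_def by blast
  also have "\<dots> \<le> k - (a * P Y1 + b * P Y2 + c * P Y3)"
  proof (rule cSUP_least)
    show "(\<Sum>i\<le>2. s i * (Xs i w - P (Xs i))) \<le> k - (a * P Y1 + b * P Y2 + c * P Y3)" for w
      using bound[of w] by (simp add: Xs_def s_def numeral_2_eq_2 algebra_simps)
  qed simp
  finally show ?thesis by simp
qed

lemma prevision_lower_bound:
  assumes P: "linear_prevision P" and Y: "gamble Y" and bound: "\<And>w. b \<le> Y w"
  shows "b \<le> P Y"
  using dF_coherent_combination_le[OF P, of Y Y Y "-1" 0 0 "- b"] Y bound by simp

lemma prevision_uminus:
  assumes P: "linear_prevision P" and Y: "gamble Y"
  shows "P (\<lambda>w. - Y w) = - P Y"
proof -
  have D: "(\<lambda>w. - Y w) \<in> {Y. gamble Y}" "Y \<in> {Y. gamble Y}"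
    using Y gamble_uminus by auto
  have "P (\<lambda>w. - Y w) + P Y \<le> 0"
    using dF_coherent_combination_le[OF P D D(2), of 1 1 0 0] by simp
  moreover have "- P (\<lambda>w. - Y w) - P Y \<le> 0"
    using dF_coherent_combination_le[OF P D D(2), of "-1" "-1" 0 0] by simp
  ultimately show ?thesis by linarith
qed

lemma prevision_square_diff:
  assumes P: "linear_prevision P" and X: "gamble X"
  shows "P (\<lambda>w. (X w - c)\<^sup>2) = prevision_variance P X + (P X - c)\<^sup>2"
proof -
  have D: "(\<lambda>w. (X w - c)\<^sup>2) \<in> {Y. gamble Y}" "(\<lambda>w. (X w)\<^sup>2) \<in> {Y. gamble Y}" "X \<in> {Y. gamble Y}"
    using X gamble_square_diff gamble_square by auto
  have "1 * P (\<lambda>w. (X w - c)\<^sup>2) + (-1) * P (\<lambda>w. (X w)\<^sup>2) + (2 * c) * P X \<le> c\<^sup>2"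
    by (rule dF_coherent_combination_le[OF P D]) (simp add: power2_eq_square algebra_simps)
  moreover have "(-1) * P (\<lambda>w. (X w - c)\<^sup>2) + 1 * P (\<lambda>w. (X w)\<^sup>2) + (-2 * c) * P X \<le> - c\<^sup>2"
    by (rule dF_coherent_combination_le[OF P D]) (simp add: power2_eq_square algebra_simps)
  ultimately show ?thesis by (simp add: power2_eq_square algebra_simps)
qed

lemma prevision_variance_le:
  assumes P: "linear_prevision P" and X: "gamble X"
  shows "prevision_variance P X \<le> P (\<lambda>w. (X w - c)\<^sup>2)"
  using prevision_square_diff[OF P X, of c] by simp

lemma prevision_variance_nonneg:
  assumes P: "linear_prevision P" and X: "gamble X"
  shows "0 \<le> prevision_variance P X"
  using prevision_square_diff[OF P X, of "P X"]
    prevision_lower_bound[OF P gamble_square_diff[OF X], of 0 "P X"] by simp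

lemma prevision_cantelli:
  assumes P: "linear_prevision P" and X: "gamble X" and t: "0 < t" and a: "a + t \<le> P X"
    and V: "prevision_variance P X \<le> V"
  shows "P (ind_le X a) \<le> V / (V + t\<^sup>2)"
proof -
  \<comment> \<open>u = V / t minimises (V + u^2) / (t + u)^2, the bound obtained from (X - P X - u)^2\<close>
  define u where "u = V / t"
  define m where "m = P X + u"
  have "0 \<le> V" using prevision_variance_nonneg[OF P X] V by linarith
  then have u: "0 \<le> u" "V = u * t" using t by (simp_all add: u_def)
  have D: "ind_le X a \<in> {Y. gamble Y}" "(\<lambda>w. (X w)\<^sup>2) \<in> {Y. gamble Y}" "X \<in> {Y. gamble Y}"
    using X gamble_square gamble_ind_le by auto
  have "(t + u)\<^sup>2 * P (ind_le X a) + (-1) * P (\<lambda>w. (X w)\<^sup>2) + (2 * m) * P X \<le> m\<^sup>2"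
  proof (rule dF_coherent_combination_le[OF P D])
    fix w
    have "(t + u)\<^sup>2 * ind_le X a w \<le> (m - X w)\<^sup>2"
    proof (cases "X w \<le> a")
      case True
      then have "t + u \<le> m - X w" using a by (simp add: m_def)
      then have "(t + u)\<^sup>2 \<le> (m - X w)\<^sup>2" using t u by (intro power_mono) auto
      then show ?thesis using True by (simp add: ind_le_def)
    qed (simp add: ind_le_def)
    then show "(t + u)\<^sup>2 * ind_le X a w + (-1) * (X w)\<^sup>2 + (2 * m) * X w \<le> m\<^sup>2"
      by (simp add: power2_eq_square algebra_simps)
  qed
  then have "(t + u)\<^sup>2 * P (ind_le X a) \<le> prevision_variance P X + u\<^sup>2"
    by (simp add: m_def power2_eq_square algebra_simps)
  also have "\<dots> \<le> (t + u) * u"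
    using V u by (simp add: power2_eq_square algebra_simps)
  finally have "(t + u) * P (ind_le X a) \<le> u"
    using t u by (simp add: power2_eq_square mult.assoc)
  then have "P (ind_le X a) \<le> u / (t + u)"
    using t u by (simp add: pos_le_divide_eq mult.commute)
  also have "\<dots> = (t * u) / (t * (t + u))"
    using t by simp
  also have "\<dots> = V / (V + t\<^sup>2)"
    using u by (simp add: power2_eq_square algebra_simps)
  finally show ?thesis .
qed

locale lower_envelope =
  fixes M :: "(('w \<Rightarrow> real) \<Rightarrow> real) set" and LQ :: "('w \<Rightarrow> real) \<Rightarrow> real"
  assumes nonempty: "M \<noteq> {}"
    and linear: "P \<in> M \<Longrightarrow> linear_prevision P"
    and envelope: "gamble Y \<Longrightarrow> LQ Y = (INF P\<in>M. P Y)"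
begin

lemma bdd_below_previsions:
  assumes Y: "gamble Y"
  shows "bdd_below ((\<lambda>P. P Y) ` M)"
proof -
  obtain B where "\<And>w. \<bar>Y w\<bar> \<le> B" using Y unfolding gamble_def by blast
  then have "\<And>w. - B \<le> Y w" by (metis abs_le_iff minus_le_iff)
  then have "\<And>P. P \<in> M \<Longrightarrow> - B \<le> P Y" using prevision_lower_bound[OF linear Y] by blast
  then show ?thesis unfolding bdd_below_def by blast
qed

lemma le_prevision: "gamble Y \<Longrightarrow> P \<in> M \<Longrightarrow> LQ Y \<le> P Y"
  using envelope bdd_below_previsions by (auto intro: cINF_lower)

lemma less_imp_prevision_less: "gamble Y \<Longrightarrow> LQ Y < W \<Longrightarrow> \<exists>P\<in>M. P Y < W"
  using envelope cINF_less_iff[OF nonempty bdd_below_previsions] by simp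

lemma prevision_le_upper: "gamble Y \<Longrightarrow> P \<in> M \<Longrightarrow> P Y \<le> upper LQ Y"
  using le_prevision[OF gamble_uminus] prevision_uminus[OF linear] by (fastforce simp: upper_def)

lemma upper_greater_imp_prevision_greater: "gamble Y \<Longrightarrow> W < upper LQ Y \<Longrightarrow> \<exists>P\<in>M. W < P Y"
  using less_imp_prevision_less[OF gamble_uminus, of Y "- W"] prevision_uminus[OF linear]
  by (fastforce simp: upper_def)

lemma lower_bound: "gamble Y \<Longrightarrow> (\<And>w. b \<le> Y w) \<Longrightarrow> b \<le> LQ Y"
  using envelope cINF_greatest[OF nonempty] prevision_lower_bound[OF linear] by metis

lemma prevision_variance_le_upper_var:
  assumes X: "gamble X" and P: "P \<in> M"
  shows "prevision_variance P X \<le> upper_var LQ X"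
  unfolding upper_var_def
proof (rule cINF_greatest)
  show "prevision_variance P X \<le> upper LQ (\<lambda>w. (X w - c)\<^sup>2)" for c
    using prevision_variance_le[OF linear[OF P] X, of c]
      prevision_le_upper[OF gamble_square_diff[OF X] P, of c] by linarith
qed simp

lemma upper_var_nonneg: "gamble X \<Longrightarrow> 0 \<le> upper_var LQ X"
  using nonempty prevision_variance_le_upper_var prevision_variance_nonneg[OF linear]
  by (meson all_not_in_conv order_trans)

lemma lower_var_nonneg: "gamble X \<Longrightarrow> 0 \<le> lower_var LQ X"
  unfolding lower_var_def by (rule cINF_greatest) (auto intro!: lower_bound gamble_square_diff)

lemma lower_var_less_imp_variance_less:
  assumes X: "gamble X" and W: "lower_var LQ X < W"
  shows "\<exists>P\<in>M. prevision_variance P X < W"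
proof -
  have "bdd_below (range (\<lambda>c. LQ (\<lambda>w. (X w - c)\<^sup>2)))"
    unfolding bdd_below_def by (auto intro!: exI[of _ 0] lower_bound gamble_square_diff X)
  then obtain c where "LQ (\<lambda>w. (X w - c)\<^sup>2) < W"
    using W unfolding lower_var_def by (auto simp: cINF_less_iff)
  then obtain P where P: "P \<in> M" and "P (\<lambda>w. (X w - c)\<^sup>2) < W"
    using less_imp_prevision_less[OF gamble_square_diff[OF X]] by blast
  then have "prevision_variance P X < W"
    using prevision_variance_le[OF linear[OF P] X, of c] by linarith
  with P show ?thesis by blast
qed

lemma cantelli_ind_le_upper:
  assumes X: "gamble X" and e: "0 < \<epsilon>"
  shows "LQ (ind_le X (upper LQ X - \<epsilon>)) \<le> upper_var LQ X / (upper_var LQ X + \<epsilon>\<^sup>2)"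
proof -
  let ?V = "upper_var LQ X"
  \<comment> \<open>upper LQ X is a supremum over M that need not be attained, hence the limit t \<rightarrow> \<epsilon>\<close>
  have bound: "LQ (ind_le X (upper LQ X - \<epsilon>)) \<le> ?V / (?V + t\<^sup>2)" if t: "0 < t" "t < \<epsilon>" for t
  proof -
    obtain P where P: "P \<in> M" and "upper LQ X - (\<epsilon> - t) < P X"
      using upper_greater_imp_prevision_greater[OF X, of "upper LQ X - (\<epsilon> - t)"] t by auto
    then have "upper LQ X - \<epsilon> + t \<le> P X" by simp
    then have "P (ind_le X (upper LQ X - \<epsilon>)) \<le> ?V / (?V + t\<^sup>2)"
      using prevision_cantelli[OF linear[OF P] X t(1)] prevision_variance_le_upper_var[OF X P] by blast
    then show ?thesis by (rule order_trans[OF le_prevision[OF gamble_ind_le P]])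
  qed
  have pos: "0 < ?V + \<epsilon>\<^sup>2" using upper_var_nonneg[OF X] e by (simp add: add_nonneg_pos)
  have "((\<lambda>t. ?V / (?V + t\<^sup>2)) \<longlongrightarrow> ?V / (?V + \<epsilon>\<^sup>2)) (at_left \<epsilon>)"
    using pos by (intro tendsto_intros) auto
  moreover have "\<forall>\<^sub>F t in at_left \<epsilon>. LQ (ind_le X (upper LQ X - \<epsilon>)) \<le> ?V / (?V + t\<^sup>2)"
    using eventually_at_left_real[OF e] by (rule eventually_mono) (auto intro: bound)
  ultimately show ?thesis by (rule tendsto_lowerbound) simp
qed

lemma cantelli_ind_le_lower:
  assumes X: "gamble X" and e: "0 < \<epsilon>"
  shows "LQ (ind_le X (LQ X - \<epsilon>)) \<le> lower_var LQ X / (lower_var LQ X + \<epsilon>\<^sup>2)"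
proof -
  let ?V = "lower_var LQ X"
  have bound: "LQ (ind_le X (LQ X - \<epsilon>)) \<le> W / (W + \<epsilon>\<^sup>2)" if W: "?V < W" for W
  proof -
    obtain P where P: "P \<in> M" and "prevision_variance P X < W"
      using lower_var_less_imp_variance_less[OF X W] by blast
    moreover have "LQ X - \<epsilon> + \<epsilon> \<le> P X" using le_prevision[OF X P] by simp
    ultimately have "P (ind_le X (LQ X - \<epsilon>)) \<le> W / (W + \<epsilon>\<^sup>2)"
      using prevision_cantelli[OF linear[OF P] X e] by simp
    then show ?thesis by (rule order_trans[OF le_prevision[OF gamble_ind_le P]])
  qed
  have pos: "0 < ?V + \<epsilon>\<^sup>2" using lower_var_nonneg[OF X] e by (simp add: add_nonneg_pos)
  have "((\<lambda>W. W / (W + \<epsilon>\<^sup>2)) \<longlongrightarrow> ?V / (?V + \<epsilon>\<^sup>2)) (at_right ?V)"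
    using pos by (intro tendsto_intros) auto
  moreover have "\<forall>\<^sub>F W in at_right ?V. LQ (ind_le X (LQ X - \<epsilon>)) \<le> W / (W + \<epsilon>\<^sup>2)"
    using eventually_at_right_real[of ?V "?V + 1"] by (rule eventually_mono) (auto intro: bound)
  ultimately show ?thesis by (rule tendsto_lowerbound) simp
qed

lemma cantelli_ind_ge_lower:
  assumes X: "gamble X" and e: "0 < \<epsilon>"
  shows "LQ (ind_ge X (LQ X + \<epsilon>)) \<le> upper_var LQ X / (upper_var LQ X + \<epsilon>\<^sup>2)"
  using cantelli_ind_le_upper[OF gamble_uminus[OF X] e]
  by (simp add: ind_ge_eq_ind_le_uminus upper_uminus upper_var_uminus)

lemma cantelli_ind_ge_upper:
  assumes X: "gamble X" and e: "0 < \<epsilon>"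
  shows "LQ (ind_ge X (upper LQ X + \<epsilon>)) \<le> lower_var LQ X / (lower_var LQ X + \<epsilon>\<^sup>2)"
  using cantelli_ind_le_lower[OF gamble_uminus[OF X] e]
  by (simp add: ind_ge_eq_ind_le_uminus upper_def lower_var_uminus)

end

theorem proposition5:
  fixes X :: "'w \<Rightarrow> real" and \<epsilon> :: real
    and LP LQ :: "('w \<Rightarrow> real) \<Rightarrow> real"
  assumes X: "gamble X"
    and eps: "\<epsilon> > 0"
    and Q: "coherent_lp {Y. gamble Y} LQ"
  shows
   "(let D = {X, (\<lambda>w. - X w), ind_le X (LP X - \<epsilon>), ind_le X (upper LP X - \<epsilon>)} in
      coherent_lp D LP \<and> (\<forall>Y\<in>D. LQ Y = LP Y) \<longrightarrow>
        LP (ind_le X (upper LP X - \<epsilon>)) \<le> upper_var LQ X / (upper_var LQ X + \<epsilon>\<^sup>2) \<and>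
        LP (ind_le X (LP X - \<epsilon>)) \<le> lower_var LQ X / (lower_var LQ X + \<epsilon>\<^sup>2))
    \<and>
    (let D = {X, (\<lambda>w. - X w), ind_ge X (LP X + \<epsilon>), ind_ge X (upper LP X + \<epsilon>)} in
      coherent_lp D LP \<and> (\<forall>Y\<in>D. LQ Y = LP Y) \<longrightarrow>
        LP (ind_ge X (LP X + \<epsilon>)) \<le> upper_var LQ X / (upper_var LQ X + \<epsilon>\<^sup>2) \<and>
        LP (ind_ge X (upper LP X + \<epsilon>)) \<le> lower_var LQ X / (lower_var LQ X + \<epsilon>\<^sup>2))"
proof -
  obtain M where "lower_envelope M LQ"
    using Q unfolding coherent_lp_def lower_envelope_def by auto
  then interpret lower_envelope M LQ .
  show ?thesis
    unfolding Let_def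
    using cantelli_ind_le_upper[OF X eps] cantelli_ind_le_lower[OF X eps]
      cantelli_ind_ge_lower[OF X eps] cantelli_ind_ge_upper[OF X eps]
    by (auto simp: upper_def)
qed

end
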